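(* Let $\alpha\in\mathbb{N}$. Suppose $g:\mathbb{R}\to\mathbb{R}$ is such that $g^{(\tau)}$ is absolutely continuous on every compact interval for $\tau=0,\dots,\alpha-1$, and $g^{(\alpha)}\in L^2(\mathbb{R})$. Suppose further that \[ \|g\|_\alpha^*:=\sup_{I\subset\mathbb{R},\ |I|<\infty}\left(\sum_{\tau=0}^{\alpha-1}\left(\int_I g^{(\tau)}(x)\,\mathrm{d}x\right)^2+\int_I|g^{(\alpha)}(x)|^2\,\mathrm{d}x\right)^{1/2}<\infty, \] where the supremum is over intervals $I$ of finite length, and that, for some $\varepsilon\in(0,1)$, \[ \|g\|_{\alpha,\mathrm{decay}}:=\sup_{x\in\mathbb{R},\ \tau\in\{0,\dots,\alpha-1\}}\left|\mathrm{e}^{(1-\varepsilon)x^2/2}g^{(\tau)}(x)\right|<\infty. \] Then for every integer $n\geq 2$, with $T=\sqrt{\frac{2}{1-\varepsilon}\alpha\ln(n)}$, \[ \left|\int_\mathbb{R}g(x)\,\mathrm{d}x-Q_{n,T}^*(g)\right|\leq C\left(\|g\|_\alpha^*+\|g\|_{\alpha,\mathrm{decay}}\right)\frac{(\ln n)^{\alpha/2+1/4}}{n^\alpha}, \] where the constant $C$ is independent of $n$ and $g$ but depends on $\alpha$ and $\varepsilon$.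
   Context: For $T>0$ and $n\in\mathbb{N}$, the trapezoidal rule is $Q_{n,T}^*(g)=\frac{2T}{n}\sum_{j=0}^{n-1}g(\xi_j^* )$ with $\xi_j^*=\frac{2T}{n}j-T$, $j=0,\dots,n-1$. *)

theory Defs
  imports "HOL-Analysis.Analysis"
begin

definition abs_cont_on :: "real set \<Rightarrow> (real \<Rightarrow> real) \<Rightarrow> bool" where
  "abs_cont_on S f \<longleftrightarrow>
     (\<forall>e>0. \<exists>\<delta>>0. \<forall>(m::nat) (a::nat \<Rightarrow> real) (b::nat \<Rightarrow> real).
        (\<forall>i<m. a i \<le> b i \<and> {a i..b i} \<subseteq> S) \<and>
        disjoint_family_on (\<lambda>i. {a i<..<b i}) {..<m} \<and>
        (\<Sum>i<m. b i - a i) < \<delta>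
        \<longrightarrow> (\<Sum>i<m. \<bar>f (b i) - f (a i)\<bar>) < e)"

definition trap_rule :: "nat \<Rightarrow> real \<Rightarrow> (real \<Rightarrow> real) \<Rightarrow> real" where
  "trap_rule n T g = (2 * T / real n) * (\<Sum>j<n. g (2 * T / real n * real j - T))"

text \<open>The quantity under the supremum in the norm, for the finite interval [a,b];
  d \<tau> stands for the \<tau>-th derivative.\<close>
definition star_term :: "nat \<Rightarrow> (nat \<Rightarrow> real \<Rightarrow> real) \<Rightarrow> real \<Rightarrow> real \<Rightarrow> real" where
  "star_term \<alpha> d a b =
     sqrt ((\<Sum>\<tau><\<alpha>. (set_lebesgue_integral lborel {a..b} (d \<tau>))\<^sup>2)
           + set_lebesgue_integral lborel {a..b} (\<lambda>x. \<bar>d \<alpha> x\<bar>\<^sup>2))"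

definition star_set :: "nat \<Rightarrow> (nat \<Rightarrow> real \<Rightarrow> real) \<Rightarrow> real set" where
  "star_set \<alpha> d = {star_term \<alpha> d a b | a b. a \<le> b}"

definition star_norm :: "nat \<Rightarrow> (nat \<Rightarrow> real \<Rightarrow> real) \<Rightarrow> real" where
  "star_norm \<alpha> d = Sup (star_set \<alpha> d)"

definition decay_set :: "nat \<Rightarrow> real \<Rightarrow> (nat \<Rightarrow> real \<Rightarrow> real) \<Rightarrow> real set" where
  "decay_set \<alpha> \<epsilon> d = {\<bar>exp ((1 - \<epsilon>) * x\<^sup>2 / 2) * d \<tau> x\<bar> | x \<tau>. \<tau> < \<alpha>}"

definition decay_norm :: "nat \<Rightarrow> real \<Rightarrow> (nat \<Rightarrow> real \<Rightarrow> real) \<Rightarrow> real" where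
  "decay_norm \<alpha> \<epsilon> d = Sup (decay_set \<alpha> \<epsilon> d)"

end

(*
  On the grid -T + j h with h = 2T/n the rule Q*_{n,T} is the left-endpoint Riemann sum.
  Integrating by parts on each cell against the scaled Bernoulli kernels h^k P_k((x - c)/h)
  (Euler-Maclaurin) writes its error on [-T, T] as boundary terms
  h^(k+1) P_(k+1)(1) (g^(k)(T) - g^(k)(-T)), k < alpha, plus a remainder bounded by
  (2h)^alpha times the integral of |g^(alpha)| over [-T, T].  The Gaussian decay makes the
  boundary terms and the tails of the integral outside [-T, T] of size
  exp(-(1 - eps) T^2 / 2) = n^(-alpha) for the chosen T, and Cauchy-Schwarz bounds the remainder
  by (4T/n)^alpha sqrt(2T) ||g||*_alpha, which is of order (ln n)^(alpha/2 + 1/4) / n^alpha.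
  Since the derivatives are only absolutely continuous, the integrations by parts rest on the
  fundamental theorem of calculus for absolutely continuous functions with an a.e. derivative,
  proved with a Henstock-Kurzweil gauge.
*)

theory Submission
  imports Defs
begin

section \<open>Absolute continuity and the fundamental theorem of calculus\<close>

lemma abs_cont_onD:
  assumes "abs_cont_on S F" "e > 0"
  obtains \<delta> where "\<delta> > 0"
    "\<And>x y. x \<le> y \<Longrightarrow> {x..y} \<subseteq> S \<Longrightarrow> y - x < \<delta> \<Longrightarrow> \<bar>F y - F x\<bar> < e"
proof -
  obtain \<delta> where "\<delta> > 0" and \<delta>: "\<And>(m::nat) a b. (\<forall>i<m. a i \<le> b i \<and> {a i..b i} \<subseteq> S) \<and>
      disjoint_family_on (\<lambda>i. {a i<..<b i}) {..<m} \<and> (\<Sum>i<m. b i - a i) < \<delta>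
      \<Longrightarrow> (\<Sum>i<m. \<bar>F (b i) - F (a i)\<bar>) < e"
    using assms unfolding abs_cont_on_def by meson
  show thesis
  proof (rule that[OF \<open>\<delta> > 0\<close>])
    fix x y :: real
    assume "x \<le> y" "{x..y} \<subseteq> S" "y - x < \<delta>"
    then show "\<bar>F y - F x\<bar> < e"
      using \<delta>[of 1 "\<lambda>_. x" "\<lambda>_. y"] by (simp add: disjoint_family_on_def)
  qed
qed

lemma abs_cont_on_imp_continuous_on:
  assumes "abs_cont_on {a..b} F"
  shows "continuous_on {a..b} F"
  unfolding continuous_on_iff
proof (intro ballI allI impI)
  fix x e :: real
  assume x: "x \<in> {a..b}" and "0 < e"
  obtain \<delta> where "\<delta> > 0" and \<delta>: "\<And>x y. x \<le> y \<Longrightarrow> {x..y} \<subseteq> {a..b} \<Longrightarrow> y - x < \<delta> \<Longrightarrow> \<bar>F y - F x\<bar> < e"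
    using abs_cont_onD[OF assms \<open>0 < e\<close>] by blast
  have "dist (F y) (F x) < e" if "y \<in> {a..b}" "dist y x < \<delta>" for y
    using \<delta>[of x y] \<delta>[of y x] x that by (cases "x \<le> y") (auto simp: dist_real_def)
  then show "\<exists>\<delta>>0. \<forall>y\<in>{a..b}. dist y x < \<delta> \<longrightarrow> dist (F y) (F x) < e"
    using \<open>\<delta> > 0\<close> by blast
qed

lemma abs_cont_on_tagged_partial_division:
  assumes "abs_cont_on S F" "e > 0"
  obtains \<delta> where "\<delta> > 0"
    "\<And>p. p tagged_partial_division_of S \<Longrightarrow> (\<Sum>(x,K)\<in>p. measure lborel K) < \<delta>
       \<Longrightarrow> (\<Sum>(x,K)\<in>p. \<bar>F (Sup K) - F (Inf K)\<bar>) < e"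
proof -
  obtain \<delta> where "\<delta> > 0" and \<delta>: "\<And>(m::nat) a b. (\<forall>i<m. a i \<le> b i \<and> {a i..b i} \<subseteq> S) \<and>
      disjoint_family_on (\<lambda>i. {a i<..<b i}) {..<m} \<and> (\<Sum>i<m. b i - a i) < \<delta>
      \<Longrightarrow> (\<Sum>i<m. \<bar>F (b i) - F (a i)\<bar>) < e"
    using assms unfolding abs_cont_on_def by meson
  show thesis
  proof (rule that[OF \<open>\<delta> > 0\<close>])
    fix p :: "(real \<times> real set) set"
    assume p: "p tagged_partial_division_of S" "(\<Sum>(x,K)\<in>p. measure lborel K) < \<delta>"
    note p_props = tagged_partial_division_ofD[OF p(1)]
    obtain t where t: "bij_betw t {..<card p} p"
      using p_props(1) by (metis atLeast0LessThan ex_bij_betw_nat_finite)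
    define a where "a i = Inf (snd (t i))" for i
    define b where "b i = Sup (snd (t i))" for i
    have t_eq: "snd (t i) = {a i..b i}" "a i \<le> b i" "{a i..b i} \<subseteq> S" if "i < card p" for i
    proof -
      have mem: "(fst (t i), snd (t i)) \<in> p" using t that by (auto simp: bij_betw_def)
      obtain u v where "snd (t i) = cbox u v" using p_props(4)[OF mem] by blast
      moreover have "snd (t i) \<noteq> {}" "snd (t i) \<subseteq> S" using p_props(2,3)[OF mem] by auto
      ultimately show "snd (t i) = {a i..b i}" "a i \<le> b i" "{a i..b i} \<subseteq> S"
        by (auto simp: a_def b_def)
    qed
    have "(\<Sum>i<card p. \<bar>F (b i) - F (a i)\<bar>) < e"
    proof (rule \<delta>, intro conjI allI impI)
      show "disjoint_family_on (\<lambda>i. {a i<..<b i}) {..<card p}"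
        unfolding disjoint_family_on_def
      proof (intro ballI impI)
        fix i j assume ij: "i \<in> {..<card p}" "j \<in> {..<card p}" "i \<noteq> j"
        then have "t i \<noteq> t j" "t i \<in> p" "t j \<in> p"
          using t by (auto simp: bij_betw_def inj_on_def)
        then have "interior (snd (t i)) \<inter> interior (snd (t j)) = {}"
          using p_props(5) by (metis prod.collapse)
        then show "{a i<..<b i} \<inter> {a j<..<b j} = {}" using t_eq ij by simp
      qed
      have "(\<Sum>i<card p. b i - a i) = (\<Sum>i<card p. measure lborel (snd (t i)))"
        using t_eq by (intro sum.cong) auto
      also have "\<dots> = (\<Sum>(x,K)\<in>p. measure lborel K)"
        using sum.reindex_bij_betw[OF t, of "\<lambda>(x,K). measure lborel K"] by (simp add: split_def)
      finally show "(\<Sum>i<card p. b i - a i) < \<delta>" using p(2) by simp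
    qed (use t_eq in auto)
    also have "(\<Sum>i<card p. \<bar>F (b i) - F (a i)\<bar>) = (\<Sum>(x,K)\<in>p. \<bar>F (Sup K) - F (Inf K)\<bar>)"
      using sum.reindex_bij_betw[OF t, of "\<lambda>(x,K). \<bar>F (Sup K) - F (Inf K)\<bar>"]
      by (simp add: a_def b_def split_def)
    finally show "(\<Sum>(x,K)\<in>p. \<bar>F (Sup K) - F (Inf K)\<bar>) < e" .
  qed
qed

lemma negligible_imp_small_ball_cover:
  assumes "negligible N" "\<delta> > 0"
  obtains U s where "U \<in> lmeasurable" "measure lebesgue U < \<delta>"
    "\<And>x. s x > 0" "\<And>x. x \<in> N \<Longrightarrow> ball x (s x) \<subseteq> U"
proof -
  have N: "N \<in> lmeasurable" "measure lebesgue N = 0"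
    using assms(1) negligible_iff_measure by blast+
  obtain U where U: "open U" "N \<subseteq> U" "U - N \<in> lmeasurable" "emeasure lebesgue (U - N) < \<delta>"
    using sets_lebesgue_outer_open[OF fmeasurableD[OF N(1)] assms(2)] by blast
  have "U = (U - N) \<union> N" using U(2) by blast
  then have "U \<in> lmeasurable" "measure lebesgue U \<le> measure lebesgue (U - N) + measure lebesgue N"
    using U(3) N(1) by (metis fmeasurable.Un, metis measure_Un_le fmeasurableD)
  moreover have "measure lebesgue (U - N) < \<delta>"
    using U(3,4) assms(2) by (metis emeasure_eq_measure2 ennreal_less_iff measure_nonneg)
  moreover have "\<forall>x. \<exists>s>0. x \<in> N \<longrightarrow> ball x s \<subseteq> U"
  proof
    fix x
    show "\<exists>s>0. x \<in> N \<longrightarrow> ball x s \<subseteq> U"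
    proof (cases "x \<in> N")
      case True
      then show ?thesis using U(1,2) by (meson openE subsetD)
    qed (auto intro: exI[of _ 1])
  qed
  then obtain s where "\<And>x. s x > 0" "\<And>x. x \<in> N \<Longrightarrow> ball x (s x) \<subseteq> U"
    by metis
  ultimately show thesis using that N(2) by (metis add.right_neutral order_le_less_trans)
qed

lemma real_derivative_gauge:
  assumes "\<And>x. x \<notin> N \<Longrightarrow> (F has_real_derivative f x) (at x)" "e > 0"
  obtains r where "\<And>x. r x > 0"
    "\<And>x y. x \<notin> N \<Longrightarrow> \<bar>y - x\<bar> < r x \<Longrightarrow> \<bar>F y - F x - (y - x) * f x\<bar> \<le> e * \<bar>y - x\<bar>"
proof -
  have "\<forall>x. \<exists>r>0. x \<notin> N \<longrightarrow> (\<forall>y. \<bar>y - x\<bar> < r \<longrightarrow> \<bar>F y - F x - (y - x) * f x\<bar> \<le> e * \<bar>y - x\<bar>)"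
  proof
    fix x
    show "\<exists>r>0. x \<notin> N \<longrightarrow> (\<forall>y. \<bar>y - x\<bar> < r \<longrightarrow> \<bar>F y - F x - (y - x) * f x\<bar> \<le> e * \<bar>y - x\<bar>)"
    proof (cases "x \<in> N")
      case False
      then have "(F has_derivative (\<lambda>u. u * f x)) (at x)"
        using assms(1) by (simp add: has_field_derivative_def mult.commute[of _ "f x"])
      then have "\<forall>\<eta>>0. \<exists>r>0. \<forall>y. \<bar>y - x\<bar> < r \<longrightarrow> \<bar>F y - F x - (y - x) * f x\<bar> \<le> \<eta> * \<bar>y - x\<bar>"
        unfolding has_derivative_at_alt by simp
      then obtain r where "r > 0" "\<forall>y. \<bar>y - x\<bar> < r \<longrightarrow> \<bar>F y - F x - (y - x) * f x\<bar> \<le> e * \<bar>y - x\<bar>"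
        using \<open>e > 0\<close> by blast
      then show ?thesis by blast
    qed (auto intro: exI[of _ 1])
  qed
  then obtain r where "\<forall>x. r x > 0 \<and> (x \<notin> N \<longrightarrow>
      (\<forall>y. \<bar>y - x\<bar> < r x \<longrightarrow> \<bar>F y - F x - (y - x) * f x\<bar> \<le> e * \<bar>y - x\<bar>))"
    by metis
  then show thesis using that by blast
qed

lemma interval_increment_close_to_derivative:
  fixes F :: "real \<Rightarrow> real"
  assumes "K = cbox u v" "x \<in> K" "K \<subseteq> ball x r"
    and "\<And>y. \<bar>y - x\<bar> < r \<Longrightarrow> \<bar>F y - F x - (y - x) * c\<bar> \<le> e * \<bar>y - x\<bar>"
  shows "\<bar>measure lborel K * c - (F (Sup K) - F (Inf K))\<bar> \<le> e * measure lborel K"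
proof -
  have "u \<le> x" "x \<le> v" using assms(1,2) by auto
  have "u \<in> K" "v \<in> K" using assms(1) \<open>u \<le> x\<close> \<open>x \<le> v\<close> by auto
  then have "\<bar>u - x\<bar> < r" "\<bar>v - x\<bar> < r"
    using assms(3) by (auto simp: dist_real_def abs_minus_commute)
  have "\<bar>(v - u) * c - (F v - F u)\<bar> = \<bar>(F u - F x - (u - x) * c) - (F v - F x - (v - x) * c)\<bar>"
    by (simp add: algebra_simps)
  also have "\<dots> \<le> \<bar>F u - F x - (u - x) * c\<bar> + \<bar>F v - F x - (v - x) * c\<bar>"
    by (rule abs_triangle_ineq4)
  also have "\<dots> \<le> e * \<bar>u - x\<bar> + e * \<bar>v - x\<bar>"
    using assms(4)[OF \<open>\<bar>u - x\<bar> < r\<close>] assms(4)[OF \<open>\<bar>v - x\<bar> < r\<close>] by (rule add_mono)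
  also have "\<dots> = e * (v - u)"
    using \<open>u \<le> x\<close> \<open>x \<le> v\<close> by (simp add: algebra_simps)
  finally show ?thesis
    using assms(1) \<open>u \<le> x\<close> \<open>x \<le> v\<close> by simp
qed

lemma tagged_partial_division_content_le_measure:
  assumes p: "p tagged_partial_division_of S" and "\<Union>(snd ` p) \<subseteq> U" "U \<in> lmeasurable"
  shows "(\<Sum>(x,K)\<in>p. measure lborel K) \<le> measure lebesgue U"
proof -
  have "(\<Sum>(x,K)\<in>p. measure lborel K) = (\<Sum>K\<in>snd ` p. measure lborel K)"
    by (rule sum.over_tagged_division_lemma[OF tagged_partial_division_of_Union_self[OF p]])
      (rule sum_content.box_empty_imp)
  also have "\<dots> = (\<Sum>K\<in>snd ` p. measure lebesgue K)"
  proof (rule sum.cong[OF refl])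
    fix K assume "K \<in> snd ` p"
    then obtain u v where "K = cbox u v" using tagged_partial_division_ofD(4)[OF p] by force
    then show "measure lborel K = measure lebesgue K" by simp
  qed
  also have "\<dots> = measure lebesgue (\<Union>(snd ` p))"
    using content_division[OF partial_division_of_tagged_division[OF p]] .
  also have "\<dots> \<le> measure lebesgue U"
    using assms(2,3) lmeasurable_division[OF partial_division_of_tagged_division[OF p]]
    by (intro measure_mono_fmeasurable) auto
  finally show ?thesis .
qed

lemma tagged_division_sum_split_estimate:
  fixes F f :: "real \<Rightarrow> real"
  assumes p: "p tagged_division_of {a..b}" and "a \<le> b" "e \<ge> 0"
    and on_N: "(\<Sum>(x,K)\<in>{y\<in>p. fst y \<in> N}. \<bar>F (Sup K) - F (Inf K)\<bar>) \<le> \<eta>"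
    and off_N: "\<And>x K. (x,K) \<in> p \<Longrightarrow> x \<notin> N \<Longrightarrow>
      \<bar>measure lborel K * f x - (F (Sup K) - F (Inf K))\<bar> \<le> e * measure lborel K"
  shows "\<bar>(\<Sum>(x,K)\<in>p. measure lborel K * (if x \<in> N then 0 else f x)) - (F b - F a)\<bar> \<le> \<eta> + e * (b - a)"
proof -
  define p1 where "p1 = {y\<in>p. fst y \<in> N}"
  define p2 where "p2 = {y\<in>p. fst y \<notin> N}"
  have p12: "p = p1 \<union> p2" "p1 \<inter> p2 = {}" "finite p1" "finite p2"
    using tagged_division_of_finite[OF p] by (auto simp: p1_def p2_def)
  let ?\<phi> = "\<lambda>(x,K). measure lborel K * (if x \<in> N then 0 else f x) - (F (Sup K) - F (Inf K))"
  have "(\<Sum>(x,K)\<in>p. measure lborel K * (if x \<in> N then 0 else f x)) - (F b - F a) = (\<Sum>y\<in>p. ?\<phi> y)"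
    using additive_tagged_division_1[OF \<open>a \<le> b\<close> p, of F] by (simp add: sum_subtractf split_def)
  also have "\<dots> = (\<Sum>y\<in>p1. ?\<phi> y) + (\<Sum>y\<in>p2. ?\<phi> y)"
    using sum.union_disjoint[OF p12(3,4,2)] p12(1) by simp
  finally have split: "(\<Sum>(x,K)\<in>p. measure lborel K * (if x \<in> N then 0 else f x)) - (F b - F a)
      = (\<Sum>y\<in>p1. ?\<phi> y) + (\<Sum>y\<in>p2. ?\<phi> y)" .
  have "\<bar>\<Sum>y\<in>p1. ?\<phi> y\<bar> \<le> (\<Sum>(x,K)\<in>p1. \<bar>F (Sup K) - F (Inf K)\<bar>)"
    by (rule order_trans[OF sum_abs sum_mono]) (auto simp: p1_def)
  moreover have "\<bar>\<Sum>y\<in>p2. ?\<phi> y\<bar> \<le> (\<Sum>(x,K)\<in>p. e * measure lborel K)"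
  proof -
    have "\<bar>\<Sum>y\<in>p2. ?\<phi> y\<bar> \<le> (\<Sum>(x,K)\<in>p2. e * measure lborel K)"
      by (rule order_trans[OF sum_abs sum_mono]) (auto simp: p2_def intro: off_N)
    also have "\<dots> \<le> (\<Sum>(x,K)\<in>p. e * measure lborel K)"
      using p12 \<open>e \<ge> 0\<close> by (intro sum_mono2) auto
    finally show ?thesis .
  qed
  moreover have "(\<Sum>(x,K)\<in>p. e * measure lborel K) = e * (b - a)"
    using additive_content_tagged_division[of p a b] p \<open>a \<le> b\<close>
    by (simp add: sum_distrib_left[symmetric] split_def)
  moreover have "(\<Sum>(x,K)\<in>p1. \<bar>F (Sup K) - F (Inf K)\<bar>) \<le> \<eta>"
    using on_N unfolding p1_def .
  ultimately show ?thesis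
    unfolding split by (intro order_trans[OF abs_triangle_ineq]) linarith
qed

lemma abs_cont_on_has_integral:
  fixes F f :: "real \<Rightarrow> real"
  assumes "a \<le> b" and F: "abs_cont_on {a..b} F" and N: "negligible N"
    and F': "\<And>x. x \<notin> N \<Longrightarrow> (F has_real_derivative f x) (at x)"
  shows "(f has_integral F b - F a) {a..b}"
proof (cases "a = b")
  case True
  then show ?thesis by (simp add: has_integral_refl)
next
  case False
  with \<open>a \<le> b\<close> have "a < b" by simp
  have "((\<lambda>x. if x \<in> N then 0 else f x) has_integral F b - F a) {a..b}"
    unfolding has_integral_factor_content_real
  proof (intro allI impI)
    fix e :: real
    assume "e > 0"
    have "e / 2 > 0" using \<open>e > 0\<close> by simp
    obtain r where r: "\<And>x. r x > 0" and r_deriv: "\<And>x y. x \<notin> N \<Longrightarrow> \<bar>y - x\<bar> < r x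
        \<Longrightarrow> \<bar>F y - F x - (y - x) * f x\<bar> \<le> e / 2 * \<bar>y - x\<bar>"
      using real_derivative_gauge[OF F' \<open>e / 2 > 0\<close>] by blast
    have "e / 2 * (b - a) > 0" using \<open>e > 0\<close> \<open>a < b\<close> by simp
    then obtain \<delta> where "\<delta> > 0" and \<delta>: "\<And>p. p tagged_partial_division_of {a..b}
        \<Longrightarrow> (\<Sum>(x,K)\<in>p. measure lborel K) < \<delta> \<Longrightarrow> (\<Sum>(x,K)\<in>p. \<bar>F (Sup K) - F (Inf K)\<bar>) < e / 2 * (b - a)"
      using abs_cont_on_tagged_partial_division[OF F] by blast
    obtain U s where U: "U \<in> lmeasurable" "measure lebesgue U < \<delta>"
      and s: "\<And>x. s x > 0" and s_U: "\<And>x. x \<in> N \<Longrightarrow> ball x (s x) \<subseteq> U"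
      using negligible_imp_small_ball_cover[OF N \<open>\<delta> > 0\<close>] by blast
    \<comment> \<open>tags in \<open>N\<close> get balls inside a small cover of \<open>N\<close>, where absolute continuity controls
      the increments; at all other tags differentiability does\<close>
    define \<gamma> where "\<gamma> x = (if x \<in> N then ball x (s x) else ball x (r x))" for x
    have "gauge \<gamma>" unfolding \<gamma>_def gauge_def using r s by auto
    moreover have "\<bar>(\<Sum>(x,K)\<in>p. measure lborel K * (if x \<in> N then 0 else f x)) - (F b - F a)\<bar> \<le> e * (b - a)"
      if p: "p tagged_division_of {a..b}" "\<gamma> fine p" for p
    proof -
      have "p tagged_partial_division_of {a..b}" using p(1) by (simp add: tagged_division_of_def)
      then have p1: "{y\<in>p. fst y \<in> N} tagged_partial_division_of {a..b}"
        by (rule tagged_partial_division_subset) blast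
      have "K \<subseteq> U" if "(x,K) \<in> p" "x \<in> N" for x K
      proof -
        have "K \<subseteq> \<gamma> x" using p(2) that(1) unfolding fine_def by blast
        then show ?thesis using s_U[OF that(2)] that(2) by (auto simp: \<gamma>_def)
      qed
      then have "\<Union>(snd ` {y\<in>p. fst y \<in> N}) \<subseteq> U" by force
      then have "(\<Sum>(x,K)\<in>{y\<in>p. fst y \<in> N}. measure lborel K) < \<delta>"
        using tagged_partial_division_content_le_measure[OF p1 _ U(1)] U(2) by fastforce
      then have on_N: "(\<Sum>(x,K)\<in>{y\<in>p. fst y \<in> N}. \<bar>F (Sup K) - F (Inf K)\<bar>) \<le> e / 2 * (b - a)"
        using \<delta>[OF p1] by simp
      have off_N: "\<bar>measure lborel K * f x - (F (Sup K) - F (Inf K))\<bar> \<le> e / 2 * measure lborel K"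
        if xK: "(x,K) \<in> p" "x \<notin> N" for x K
      proof -
        obtain u v where "K = cbox u v" using tagged_division_ofD(4)[OF p(1) xK(1)] by blast
        moreover have "x \<in> K" using tagged_division_ofD(2)[OF p(1) xK(1)] .
        moreover have "K \<subseteq> ball x (r x)" using p(2) xK unfolding fine_def \<gamma>_def by fastforce
        ultimately show ?thesis by (rule interval_increment_close_to_derivative[OF _ _ _ r_deriv[OF xK(2)]])
      qed
      have "\<bar>(\<Sum>(x,K)\<in>p. measure lborel K * (if x \<in> N then 0 else f x)) - (F b - F a)\<bar>
          \<le> e / 2 * (b - a) + e / 2 * (b - a)"
        using \<open>e > 0\<close> by (intro tagged_division_sum_split_estimate[OF p(1) \<open>a \<le> b\<close> _ on_N off_N]) simp
      then show ?thesis by simp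
    qed
    ultimately show "\<exists>\<gamma>. gauge \<gamma> \<and> (\<forall>p. p tagged_division_of {a..b} \<and> \<gamma> fine p \<longrightarrow>
        norm ((\<Sum>(x,K)\<in>p. measure lborel K *\<^sub>R (if x \<in> N then 0 else f x)) - (F b - F a))
          \<le> e * measure lborel {a..b})"
      using \<open>a \<le> b\<close> by auto
  qed
  then show ?thesis
    by (rule has_integral_spike[OF N, rotated]) simp
qed

section \<open>Bernoulli kernels\<close>

text \<open>On \<open>[0, 1]\<close>, \<open>bernoulli_kernel k\<close> is the Bernoulli polynomial \<open>B\<^sub>k\<close> divided by \<open>k!\<close>:
  each kernel is the mean-zero antiderivative of the previous one.\<close>

primrec bernoulli_kernel :: "nat \<Rightarrow> real \<Rightarrow> real" where
  "bernoulli_kernel 0 = (\<lambda>t. 1)"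
| "bernoulli_kernel (Suc k) = (\<lambda>t. integral {0..t} (bernoulli_kernel k)
     - integral {0..1} (\<lambda>s. integral {0..s} (bernoulli_kernel k)))"

lemma continuous_on_bernoulli_kernel: "continuous_on {0..1} (bernoulli_kernel k)"
proof (induction k)
  case (Suc k)
  have "continuous_on {0..1} (\<lambda>t. integral {0..t} (bernoulli_kernel k))"
    by (rule indefinite_integral_continuous_1[OF integrable_continuous_real[OF Suc]])
  then show ?case by (simp add: continuous_on_diff)
qed simp

lemma bernoulli_kernel_has_derivative:
  assumes "t \<in> {0..1}"
  shows "(bernoulli_kernel (Suc k) has_real_derivative bernoulli_kernel k t) (at t within {0..1})"
proof -
  have "((\<lambda>u. integral {0..u} (bernoulli_kernel k)) has_real_derivative bernoulli_kernel k t)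
      (at t within {0..1})"
    using integral_has_vector_derivative[OF continuous_on_bernoulli_kernel assms]
    by (simp add: has_real_derivative_iff_has_vector_derivative)
  from DERIV_diff[OF this DERIV_const] show ?thesis by simp
qed

lemma abs_bernoulli_kernel_le: "t \<in> {0..1} \<Longrightarrow> \<bar>bernoulli_kernel k t\<bar> \<le> 2 ^ k"
proof (induction k arbitrary: t)
  case (Suc k)
  have primitive_le: "\<bar>integral {0..s} (bernoulli_kernel k)\<bar> \<le> 2 ^ k" if "s \<in> {0..1}" for s
  proof -
    have "\<bar>integral {0..s} (bernoulli_kernel k)\<bar> \<le> 2 ^ k * s"
      using integral_norm_bound_integral[of "bernoulli_kernel k" "{0..s}" "\<lambda>_. 2 ^ k"]
        integrable_continuous_real[OF continuous_on_subset[OF continuous_on_bernoulli_kernel, of "{0..s}"]]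
        Suc.IH that by (auto simp: mult.commute)
    also have "\<dots> \<le> 2 ^ k" using that by simp
    finally show ?thesis .
  qed
  have "continuous_on {0..1} (\<lambda>s. integral {0..s} (bernoulli_kernel k))"
    by (rule indefinite_integral_continuous_1[OF integrable_continuous_real[OF continuous_on_bernoulli_kernel]])
  then have "\<bar>integral {0..1} (\<lambda>s. integral {0..s} (bernoulli_kernel k))\<bar> \<le> 2 ^ k"
    using integral_norm_bound_integral[of _ "{0..1::real}" "\<lambda>_. 2 ^ k"] primitive_le
    by (force intro: integrable_continuous_real)
  with primitive_le[OF Suc.prems] show ?case by simp
qed simp

lemma bernoulli_kernel_Suc_diff:
  "bernoulli_kernel (Suc k) 1 - bernoulli_kernel (Suc k) 0 = (if k = 0 then 1 else 0)"
proof (cases k)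
  case 0
  then show ?thesis by simp
next
  case (Suc j)
  have "continuous_on {0..1} (\<lambda>s. integral {0..s} (bernoulli_kernel j))"
    by (rule indefinite_integral_continuous_1[OF integrable_continuous_real[OF continuous_on_bernoulli_kernel]])
  then have "integral {0..1} (bernoulli_kernel (Suc j)) = 0"
    by (simp add: integral_diff integrable_continuous_real)
  with Suc show ?thesis by simp
qed

declare bernoulli_kernel.simps(2) [simp del]

definition cell_kernel :: "real \<Rightarrow> nat \<Rightarrow> real \<Rightarrow> real \<Rightarrow> real" where
  "cell_kernel h k c x = h ^ k * bernoulli_kernel k ((x - c) / h)"

lemma cell_kernel_has_derivative:
  assumes "h > 0" "x \<in> {c..c+h}"
  shows "(cell_kernel h (Suc k) c has_real_derivative cell_kernel h k c x) (at x within {c..c+h})"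
proof -
  have "(x - c) / h \<in> {0..1}" "(\<lambda>x. (x - c) / h) ` {c..c+h} \<subseteq> {0..1}"
    using assms by (auto simp: field_simps)
  then have "((bernoulli_kernel (Suc k) \<circ> (\<lambda>x. (x - c) / h)) has_real_derivative
      bernoulli_kernel k ((x - c) / h) * (1 / h)) (at x within {c..c+h})"
    using assms(1) by (intro DERIV_image_chain[OF DERIV_subset[OF bernoulli_kernel_has_derivative]])
      (auto intro!: derivative_eq_intros)
  then have "((\<lambda>x. h ^ Suc k * bernoulli_kernel (Suc k) ((x - c) / h)) has_real_derivative
      h ^ Suc k * (bernoulli_kernel k ((x - c) / h) * (1 / h))) (at x within {c..c+h})"
    by (intro DERIV_cmult) (simp add: o_def)
  then show ?thesis
    using assms(1) unfolding cell_kernel_def by (simp add: field_simps)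
qed

lemma continuous_on_cell_kernel:
  assumes "h > 0"
  shows "continuous_on {c..c+h} (cell_kernel h k c)"
proof -
  have "(\<lambda>x. (x - c) / h) ` {c..c+h} \<subseteq> {0..1}" using assms by (auto simp: field_simps)
  then have "continuous_on {c..c+h} (bernoulli_kernel k \<circ> (\<lambda>x. (x - c) / h))"
    using assms by (intro continuous_on_compose continuous_on_subset[OF continuous_on_bernoulli_kernel])
      (auto intro!: continuous_intros)
  then show ?thesis unfolding cell_kernel_def o_def by (intro continuous_intros)
qed

lemma abs_cell_kernel_le:
  assumes "h > 0" "x \<in> {c..c+h}"
  shows "\<bar>cell_kernel h k c x\<bar> \<le> (2 * h) ^ k"
proof -
  have "(x - c) / h \<in> {0..1}" using assms by (auto simp: field_simps)
  from abs_bernoulli_kernel_le[OF this, of k] show ?thesis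
    using assms(1) unfolding cell_kernel_def by (simp add: abs_mult power_mult_distrib mult_left_mono)
qed

lemma cell_kernel_has_integral:
  assumes "h > 0"
  shows "(cell_kernel h k c has_integral (if k = 0 then h else 0)) {c..c+h}"
proof -
  have "(cell_kernel h k c has_integral cell_kernel h (Suc k) c (c + h) - cell_kernel h (Suc k) c c) {c..c+h}"
    using assms cell_kernel_has_derivative[OF assms]
    by (intro fundamental_theorem_of_calculus)
      (auto simp: has_real_derivative_iff_has_vector_derivative[symmetric])
  also have "cell_kernel h (Suc k) c (c + h) - cell_kernel h (Suc k) c c
      = h ^ Suc k * (bernoulli_kernel (Suc k) 1 - bernoulli_kernel (Suc k) 0)"
    using assms unfolding cell_kernel_def by (simp add: right_diff_distrib)
  also have "\<dots> = (if k = 0 then h else 0)"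
    by (simp add: bernoulli_kernel_Suc_diff)
  finally show ?thesis .
qed

section \<open>Gaussian tails and square integrability\<close>

lemma gaussian_right_tail_bound:
  fixes f :: "real \<Rightarrow> real"
  assumes "continuous_on {T..} f" "c > 0" "T > 0"
    and bound: "\<And>x. x \<ge> T \<Longrightarrow> \<bar>f x\<bar> \<le> D * exp (- (c * x\<^sup>2 / 2))"
  shows "f absolutely_integrable_on {T..}"
    "\<bar>integral {T..} f\<bar> \<le> D * exp (- (c * T\<^sup>2 / 2)) / (c * T)"
proof -
  define \<beta> where "\<beta> = D * exp (- (c * T\<^sup>2 / 2))"
  define a where "a = c * T"
  have "a > 0" using assms(2,3) unfolding a_def by simp
  have "0 \<le> D * exp (- (c * T\<^sup>2 / 2))" using bound[of T] abs_ge_zero order_trans by blast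
  then have "D \<ge> 0" by (simp add: zero_le_mult_iff)
  have exp_bound: "\<bar>f x\<bar> \<le> \<beta> * exp (- (a * (x - T)))" if "x \<ge> T" for x
  proof -
    \<comment> \<open>the convex exponent \<open>c x\<^sup>2 / 2\<close> lies above its tangent at \<open>T\<close>\<close>
    have "0 \<le> c * (x - T)\<^sup>2 / 2" using \<open>c > 0\<close> by simp
    then have "c * T\<^sup>2 / 2 + a * (x - T) \<le> c * x\<^sup>2 / 2"
      unfolding a_def by (simp add: power2_eq_square algebra_simps)
    then have "exp (- (c * x\<^sup>2 / 2)) \<le> exp (- (c * T\<^sup>2 / 2)) * exp (- (a * (x - T)))"
      by (simp flip: exp_add)
    from mult_left_mono[OF this \<open>D \<ge> 0\<close>] show ?thesis
      using bound[OF that] unfolding \<beta>_def by (simp add: mult.assoc)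
  qed
  have shifted: "\<beta> * exp (- (a * (x - T))) = (\<beta> * exp (a * T)) * exp (- a * x)" for x
    by (simp add: algebra_simps exp_add[symmetric])
  have total: "(\<beta> * exp (a * T)) * (exp (- a * T) / a) = \<beta> / a"
    by (simp add: exp_minus field_simps)
  have majorant: "((\<lambda>x. \<beta> * exp (- (a * (x - T)))) has_integral \<beta> / a) {T..}"
    using has_integral_mult_right[OF has_integral_exp_minus_to_infinity[OF \<open>a > 0\<close>, of T], of "\<beta> * exp (a * T)"]
    unfolding shifted total .
  have "f \<in> borel_measurable (lebesgue_on {T..})"
    using assms(1) by (rule continuous_imp_measurable_on_sets_lebesgue) auto
  then have f_int: "f integrable_on {T..}"
    by (rule measurable_bounded_by_integrable_imp_integrable)
      (use majorant exp_bound in \<open>auto simp: integrable_on_def\<close>)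
  then show "f absolutely_integrable_on {T..}"
    by (rule absolutely_integrable_integrable_bound[rotated])
      (use majorant exp_bound in \<open>auto simp: integrable_on_def\<close>)
  have "\<bar>integral {T..} f\<bar> \<le> integral {T..} (\<lambda>x. \<beta> * exp (- (a * (x - T))))"
    by (rule integral_norm_bound_integral[OF f_int, simplified])
      (use majorant exp_bound in \<open>auto simp: integrable_on_def\<close>)
  then show "\<bar>integral {T..} f\<bar> \<le> D * exp (- (c * T\<^sup>2 / 2)) / (c * T)"
    using integral_unique[OF majorant] unfolding \<beta>_def a_def by simp
qed

lemma gaussian_tails_integral_bound:
  fixes f :: "real \<Rightarrow> real"
  assumes "continuous_on UNIV f" "c > 0" "T > 0"
    and bound: "\<And>x. \<bar>f x\<bar> \<le> D * exp (- (c * x\<^sup>2 / 2))"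
  shows "integrable lborel f"
    "\<bar>integral\<^sup>L lborel f - integral {-T..T} f\<bar> \<le> 2 * D * exp (- (c * T\<^sup>2 / 2)) / (c * T)"
proof -
  have "continuous_on UNIV (\<lambda>x. f (- x))"
    by (rule continuous_on_compose2[OF assms(1)]) (auto intro!: continuous_intros)
  moreover have "\<bar>f (- x)\<bar> \<le> D * exp (- (c * x\<^sup>2 / 2))" for x
    using bound[of "- x"] by simp
  ultimately have left: "(\<lambda>x. f (- x)) absolutely_integrable_on {T..}"
    "\<bar>integral {T..} (\<lambda>x. f (- x))\<bar> \<le> D * exp (- (c * T\<^sup>2 / 2)) / (c * T)"
    using gaussian_right_tail_bound[OF continuous_on_subset[OF _ subset_UNIV] assms(2,3)] by blast+
  have right: "f absolutely_integrable_on {T..}"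
    "\<bar>integral {T..} f\<bar> \<le> D * exp (- (c * T\<^sup>2 / 2)) / (c * T)"
    using gaussian_right_tail_bound[OF continuous_on_subset[OF assms(1) subset_UNIV] assms(2,3)] bound
    by blast+
  have reflect: "f absolutely_integrable_on {..-T}" "integral {..-T} f = integral {T..} (\<lambda>x. f (- x))"
    using has_absolute_integral_reflect_real[of "{T..}" "{..-T}" f] left(1) by force+
  have central: "f absolutely_integrable_on {-T..T}"
    by (rule absolutely_integrable_continuous_real[OF continuous_on_subset[OF assms(1)]]) auto
  have UNIV_split: "UNIV = ({..-T} \<union> {-T..T}) \<union> {T..}" using assms(3) by auto
  have "f absolutely_integrable_on UNIV"
    unfolding UNIV_split by (intro absolutely_integrable_Un reflect(1) central right(1))
  then have "integrable lebesgue f" by (simp add: set_integrable_def)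
  moreover have "f \<in> borel_measurable lborel"
    using borel_measurable_continuous_onI[OF assms(1)] by simp
  ultimately show "integrable lborel f" using integrable_completion by blast
  then have "integral\<^sup>L lborel f = integral UNIV f" by (simp add: integral_lborel)
  also have "\<dots> = integral {..-T} f + integral {-T..T} f + integral {T..} f"
  proof -
    have "negligible ({..-T} \<inter> {-T..T})" "negligible (({..-T} \<union> {-T..T}) \<inter> {T..})"
      using assms(3) by (auto intro: negligible_subset[of "{- T, T}"])
    then have "(f has_integral integral {..-T} f + integral {-T..T} f + integral {T..} f) UNIV"
      unfolding UNIV_split using reflect(1) central right(1)
      by (intro has_integral_Un integrable_integral) (auto simp: absolutely_integrable_on_def)
    then show ?thesis by (rule integral_unique)
  qed
  finally have "integral\<^sup>L lborel f - integral {-T..T} f = integral {T..} (\<lambda>x. f (- x)) + integral {T..} f"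
    using reflect(2) by simp
  then show "\<bar>integral\<^sup>L lborel f - integral {-T..T} f\<bar> \<le> 2 * D * exp (- (c * T\<^sup>2 / 2)) / (c * T)"
    using left(2) right(2) by simp
qed

lemma integral_abs_le_sqrt_length_mult:
  fixes f :: "real \<Rightarrow> real"
  assumes "a \<le> b" and abs_int: "(\<lambda>x. \<bar>f x\<bar>) integrable_on {a..b}"
    and sq_int: "(\<lambda>x. (f x)\<^sup>2) integrable_on {a..b}"
  shows "integral {a..b} (\<lambda>x. \<bar>f x\<bar>) \<le> sqrt ((b - a) * integral {a..b} (\<lambda>x. (f x)\<^sup>2))"
proof -
  define J where "J = integral {a..b} (\<lambda>x. \<bar>f x\<bar>)"
  define I where "I = integral {a..b} (\<lambda>x. (f x)\<^sup>2)"
  have "I \<ge> 0" unfolding I_def using sq_int by (intro integral_nonneg) auto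
  \<comment> \<open>AM-GM in the form \<open>2 \<bar>y\<bar> \<le> t y\<^sup>2 + 1/t\<close>, optimised over \<open>t\<close> below\<close>
  have am_gm: "2 * J \<le> t * I + (b - a) / t" if "t > 0" for t
  proof -
    have "2 * \<bar>y\<bar> \<le> t * y\<^sup>2 + 1 / t" for y
    proof -
      have "0 \<le> (t * \<bar>y\<bar> - 1)\<^sup>2 / t" using that by simp
      then show ?thesis using that by (simp add: power2_eq_square field_simps)
    qed
    then have "integral {a..b} (\<lambda>x. 2 * \<bar>f x\<bar>) \<le> integral {a..b} (\<lambda>x. t * (f x)\<^sup>2 + 1 / t)"
      using abs_int sq_int that by (intro integral_le integrable_add) auto
    also have "integral {a..b} (\<lambda>x. t * (f x)\<^sup>2 + 1 / t)
        = integral {a..b} (\<lambda>x. t * (f x)\<^sup>2) + integral {a..b} (\<lambda>x. 1 / t)"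
      using sq_int that by (intro Henstock_Kurzweil_Integration.integral_add) auto
    finally show ?thesis
      using assms(1) by (simp add: J_def I_def)
  qed
  consider "b = a" | "b > a" "I = 0" | "b > a" "I > 0" using assms(1) \<open>I \<ge> 0\<close> by linarith
  then have "J \<le> sqrt ((b - a) * I)"
  proof cases
    case 1
    then show ?thesis by (simp add: J_def)
  next
    case 2
    have "J \<le> 0"
    proof (rule ccontr)
      assume "\<not> J \<le> 0"
      with am_gm[of "(b - a + 1) / J"] 2 have "2 * J \<le> (b - a) * J / (b - a + 1)" by simp
      also have "\<dots> < J" using 2 \<open>\<not> J \<le> 0\<close> by (simp add: field_simps)
      finally show False using \<open>\<not> J \<le> 0\<close> by simp
    qed
    then show ?thesis using 2 by simp
  next
    case 3
    define s r where "s = sqrt (b - a)" and "r = sqrt I"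
    have "s > 0" "r > 0" "b - a = s\<^sup>2" "I = r\<^sup>2"
      using 3 by (simp_all add: s_def r_def)
    have "2 * J \<le> s / r * I + (b - a) / (s / r)"
      using am_gm[of "s / r"] \<open>s > 0\<close> \<open>r > 0\<close> by simp
    also have "\<dots> = 2 * (s * r)"
      using \<open>s > 0\<close> \<open>r > 0\<close> unfolding \<open>b - a = s\<^sup>2\<close> \<open>I = r\<^sup>2\<close> by (simp add: field_simps power2_eq_square)
    finally show ?thesis by (simp add: s_def r_def real_sqrt_mult)
  qed
  then show ?thesis unfolding J_def I_def .
qed

lemma square_integrable_imp_integrable_on:
  fixes f :: "real \<Rightarrow> real"
  assumes "f \<in> borel_measurable lborel" "integrable lborel (\<lambda>x. (f x)\<^sup>2)"
  shows "(\<lambda>x. (f x)\<^sup>2) integrable_on {a..b}" "(\<lambda>x. \<bar>f x\<bar>) integrable_on {a..b}"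
proof -
  have sq: "set_integrable lborel {a..b} (\<lambda>x. (f x)\<^sup>2)"
    unfolding set_integrable_def by (rule integrable_mult_indicator[OF _ assms(2)]) simp
  then show "(\<lambda>x. (f x)\<^sup>2) integrable_on {a..b}" by (rule set_borel_integral_eq_integral(1))
  have majorant: "set_integrable lborel {a..b} (\<lambda>x. 1 + (f x)\<^sup>2)"
    using set_integral_add(1)[OF borel_integrable_atLeastAtMost'[of a b "\<lambda>_. 1"] sq] by simp
  have "set_borel_measurable lborel {a..b} f"
    unfolding set_borel_measurable_def using assms(1) by measurable
  moreover have "norm (f x) \<le> norm (1 + (f x)\<^sup>2)" for x
  proof -
    have "0 \<le> (\<bar>f x\<bar> - 1)\<^sup>2 + \<bar>f x\<bar>" by simp
    then show ?thesis by (simp add: power2_eq_square algebra_simps)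
  qed
  ultimately have "set_integrable lborel {a..b} f"
    by (intro set_integrable_bound[OF majorant]) auto
  then show "(\<lambda>x. \<bar>f x\<bar>) integrable_on {a..b}"
    by (intro set_borel_integral_eq_integral(1) set_integrable_abs)
qed

lemma abs_le_decay_norm:
  assumes "bdd_above (decay_set \<alpha> \<epsilon> d)" "\<tau> < \<alpha>"
  shows "\<bar>d \<tau> x\<bar> \<le> decay_norm \<alpha> \<epsilon> d * exp (- ((1 - \<epsilon>) * x\<^sup>2 / 2))"
proof -
  have "\<bar>exp ((1 - \<epsilon>) * x\<^sup>2 / 2) * d \<tau> x\<bar> \<le> decay_norm \<alpha> \<epsilon> d"
    unfolding decay_norm_def using assms by (intro cSup_upper) (auto simp: decay_set_def)
  then show ?thesis by (simp add: abs_mult exp_minus field_simps)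
qed

lemma sqrt_integral_square_le_star_norm:
  assumes "bdd_above (star_set \<alpha> d)" "integrable lborel (\<lambda>x. (d \<alpha> x)\<^sup>2)" "a \<le> b"
  shows "sqrt (integral {a..b} (\<lambda>x. (d \<alpha> x)\<^sup>2)) \<le> star_norm \<alpha> d"
proof -
  have "set_integrable lborel {a..b} (\<lambda>x. (d \<alpha> x)\<^sup>2)"
    unfolding set_integrable_def by (rule integrable_mult_indicator[OF _ assms(2)]) simp
  then have "set_lebesgue_integral lborel {a..b} (\<lambda>x. \<bar>d \<alpha> x\<bar>\<^sup>2) = integral {a..b} (\<lambda>x. (d \<alpha> x)\<^sup>2)"
    using set_borel_integral_eq_integral(2) by simp
  then have "sqrt (integral {a..b} (\<lambda>x. (d \<alpha> x)\<^sup>2)) \<le> star_term \<alpha> d a b"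
    unfolding star_term_def by (simp add: sum_nonneg)
  also have "\<dots> \<le> star_norm \<alpha> d"
    unfolding star_norm_def using assms by (intro cSup_upper) (auto simp: star_set_def)
  finally show ?thesis .
qed

section \<open>Euler--Maclaurin expansion on a uniform grid\<close>

lemma sum_integral_uniform_grid:
  fixes f :: "real \<Rightarrow> real"
  assumes "h \<ge> 0" and "f integrable_on {u..u + real n * h}"
  shows "(\<Sum>j<n. integral {u + real j * h..u + real j * h + h} f) = integral {u..u + real n * h} f"
  using assms(2)
proof (induction n)
  case (Suc n)
  have "{u..u + real n * h} \<subseteq> {u..u + real (Suc n) * h}" using assms(1) by (auto simp: algebra_simps)
  then have "(\<Sum>j<n. integral {u + real j * h..u + real j * h + h} f) = integral {u..u + real n * h} f"
    using Suc integrable_subinterval_real by blast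
  moreover have "integral {u..u + real n * h} f + integral {u + real n * h..u + real n * h + h} f
      = integral {u..u + real (Suc n) * h} f"
    using Henstock_Kurzweil_Integration.integral_combine[OF _ _ Suc.prems[unfolded of_nat_Suc]] assms(1)
    by (simp add: algebra_simps)
  ultimately show ?case by simp
qed simp

locale abs_cont_derivatives =
  fixes \<alpha> :: nat and d :: "nat \<Rightarrow> real \<Rightarrow> real"
  assumes abs_cont: "\<And>\<tau> a b. \<tau> < \<alpha> \<Longrightarrow> abs_cont_on {a..b} (d \<tau>)"
    and has_derivative_ae: "\<And>\<tau>. \<tau> < \<alpha> \<Longrightarrow> AE x in lborel. (d \<tau> has_real_derivative d (Suc \<tau>) x) (at x)"
    and abs_top_integrable: "\<And>a b. (\<lambda>x. \<bar>d \<alpha> x\<bar>) integrable_on {a..b}"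
begin

lemma continuous_on_d: "\<tau> < \<alpha> \<Longrightarrow> continuous_on S (d \<tau>)"
proof (intro continuous_at_imp_continuous_on ballI)
  fix x assume "\<tau> < \<alpha>"
  then have "continuous_on {x - 1..x + 1} (d \<tau>)"
    using abs_cont abs_cont_on_imp_continuous_on by blast
  then show "isCont (d \<tau>) x"
    by (rule continuous_on_interior) simp
qed

lemma d_Suc_has_integral:
  assumes "\<tau> < \<alpha>" "a \<le> b"
  shows "(d (Suc \<tau>) has_integral d \<tau> b - d \<tau> a) {a..b}"
proof -
  obtain N where N: "{x \<in> space lborel. \<not> (d \<tau> has_real_derivative d (Suc \<tau>) x) (at x)} \<subseteq> N"
    "emeasure lborel N = 0" "N \<in> sets lborel"
    using has_derivative_ae[OF assms(1)] by (rule AE_E)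
  then have "negligible N"
    using negligible_iff_null_sets null_sets_completionI by blast
  moreover have "\<And>x. x \<notin> N \<Longrightarrow> (d \<tau> has_real_derivative d (Suc \<tau>) x) (at x)"
    using N(1) by auto
  ultimately show ?thesis by (rule abs_cont_on_has_integral[OF assms(2) abs_cont[OF assms(1)]])
qed

lemma d_has_real_derivative:
  assumes "Suc \<tau> < \<alpha>"
  shows "(d \<tau> has_real_derivative d (Suc \<tau>) x) (at x)"
proof -
  let ?a = "x - 1"
  have "((\<lambda>y. integral {?a..y} (d (Suc \<tau>))) has_real_derivative d (Suc \<tau>) x) (at x within {?a..x + 1})"
    using integral_has_vector_derivative[OF continuous_on_d[OF assms], of x ?a "x + 1"]
    by (simp add: has_real_derivative_iff_has_vector_derivative)
  then have "((\<lambda>y. integral {?a..y} (d (Suc \<tau>))) has_real_derivative d (Suc \<tau>) x) (at x within {?a<..<x + 1})"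
    by (rule DERIV_subset) auto
  then have "((\<lambda>y. integral {?a..y} (d (Suc \<tau>))) has_real_derivative d (Suc \<tau>) x) (at x)"
    using at_within_open[of x "{?a<..<x + 1}"] by simp
  from DERIV_add[OF DERIV_const this]
  have D: "((\<lambda>y. d \<tau> ?a + integral {?a..y} (d (Suc \<tau>))) has_real_derivative d (Suc \<tau>) x) (at x)"
    by simp
  have "d \<tau> ?a + integral {?a..y} (d (Suc \<tau>)) = d \<tau> y" if "y \<in> {?a<..<x + 1}" for y
    using d_Suc_has_integral[of \<tau> ?a y] assms that by (simp add: integral_unique)
  then show ?thesis
    by (intro has_field_derivative_transform_within_open[OF D, of "{?a<..<x + 1}"]) auto
qed

lemma abs_increment_le_integral:
  assumes "Suc m = \<alpha>" "a \<le> x" "x \<le> b"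
  shows "\<bar>d m x - d m a\<bar> \<le> integral {a..b} (\<lambda>y. \<bar>d \<alpha> y\<bar>)"
proof -
  have "(d \<alpha> has_integral d m x - d m a) {a..x}"
    using d_Suc_has_integral[of m a x] assms by auto
  then have "\<bar>d m x - d m a\<bar> \<le> integral {a..x} (\<lambda>y. \<bar>d \<alpha> y\<bar>)"
    using integral_norm_bound_integral[of "d \<alpha>" "{a..x}" "\<lambda>y. \<bar>d \<alpha> y\<bar>"] abs_top_integrable
    by (auto simp: integral_unique has_integral_integrable)
  also have "\<dots> \<le> integral {a..b} (\<lambda>y. \<bar>d \<alpha> y\<bar>)"
    using assms(2,3) abs_top_integrable by (intro integral_subset_le) auto
  finally show ?thesis .
qed

text \<open>Subtracting the
  left-endpoint term for \<open>k = 0\<close> gives the recursion \<open>cell_remainder_Suc\<close> the same form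
  for all \<open>k\<close>.\<close>

definition cell_remainder :: "real \<Rightarrow> nat \<Rightarrow> real \<Rightarrow> real" where
  "cell_remainder h k c =
     integral {c..c+h} (\<lambda>x. cell_kernel h k c x * d k x) - (if k = 0 then h * d 0 c else 0)"

lemma cell_remainder_Suc:
  assumes "h > 0" "Suc k < \<alpha>"
  shows "cell_remainder h k c
    = h ^ Suc k * bernoulli_kernel (Suc k) 1 * (d k (c + h) - d k c) - cell_remainder h (Suc k) c"
proof -
  let ?I = "\<lambda>k. integral {c..c+h} (\<lambda>x. cell_kernel h k c x * d k x)"
  have "((\<lambda>x. cell_kernel h (Suc k) c x * d k x) has_real_derivative
      cell_kernel h k c x * d k x + cell_kernel h (Suc k) c x * d (Suc k) x) (at x within {c..c+h})"
    if "x \<in> {c..c+h}" for x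
    using DERIV_mult[OF cell_kernel_has_derivative[OF assms(1) that]
        has_field_derivative_at_within[OF d_has_real_derivative[OF assms(2)]]]
    by (simp add: mult.commute)
  then have ftc: "((\<lambda>x. cell_kernel h k c x * d k x + cell_kernel h (Suc k) c x * d (Suc k) x) has_integral
      cell_kernel h (Suc k) c (c + h) * d k (c + h) - cell_kernel h (Suc k) c c * d k c) {c..c+h}"
    using assms(1) by (intro fundamental_theorem_of_calculus)
      (auto simp: has_real_derivative_iff_has_vector_derivative[symmetric])
  have "(\<lambda>x. cell_kernel h (Suc k) c x * d (Suc k) x) integrable_on {c..c+h}"
    using assms by (intro integrable_continuous_real continuous_on_mult continuous_on_cell_kernel continuous_on_d)
  from has_integral_diff[OF ftc integrable_integral[OF this]]
  have "((\<lambda>x. cell_kernel h k c x * d k x) has_integral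
      cell_kernel h (Suc k) c (c + h) * d k (c + h) - cell_kernel h (Suc k) c c * d k c - ?I (Suc k)) {c..c+h}"
    by simp
  then have "?I k = h ^ Suc k * bernoulli_kernel (Suc k) 1 * d k (c + h)
      - h ^ Suc k * bernoulli_kernel (Suc k) 0 * d k c - ?I (Suc k)"
    using assms(1) by (simp add: integral_unique cell_kernel_def)
  moreover have "bernoulli_kernel (Suc k) 0 = bernoulli_kernel (Suc k) 1 - (if k = 0 then 1 else 0)"
    using bernoulli_kernel_Suc_diff[of k] by simp
  ultimately show ?thesis
    unfolding cell_remainder_def by (simp add: algebra_simps)
qed

lemma abs_cell_remainder_top:
  assumes "h > 0" "Suc m = \<alpha>"
  shows "\<bar>cell_remainder h m c\<bar> \<le> (2 * h) ^ \<alpha> * integral {c..c+h} (\<lambda>x. \<bar>d \<alpha> x\<bar>)"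
proof -
  let ?J = "integral {c..c+h} (\<lambda>x. \<bar>d \<alpha> x\<bar>)"
  have "m < \<alpha>" using assms(2) by simp
  have oscillation: "\<bar>d m x - d m c\<bar> \<le> ?J" if "x \<in> {c..c+h}" for x
    using abs_increment_le_integral[OF assms(2)] that by simp
  have int: "(\<lambda>x. cell_kernel h m c x * (d m x - d m c)) integrable_on {c..c+h}"
    using assms(1) \<open>m < \<alpha>\<close>
    by (intro integrable_continuous_real continuous_intros continuous_on_cell_kernel continuous_on_d)
  moreover have "((\<lambda>x. cell_kernel h m c x * d m c) has_integral (if m = 0 then h * d 0 c else 0)) {c..c+h}"
    using has_integral_mult_left[OF cell_kernel_has_integral[OF assms(1)], of m c "d m c"]
    by (cases "m = 0") auto
  ultimately have "((\<lambda>x. cell_kernel h m c x * (d m x - d m c) + cell_kernel h m c x * d m c) has_integral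
      integral {c..c+h} (\<lambda>x. cell_kernel h m c x * (d m x - d m c)) + (if m = 0 then h * d 0 c else 0)) {c..c+h}"
    by (intro has_integral_add integrable_integral)
  then have "cell_remainder h m c = integral {c..c+h} (\<lambda>x. cell_kernel h m c x * (d m x - d m c))"
    unfolding cell_remainder_def by (simp add: algebra_simps integral_unique)
  also have "\<bar>\<dots>\<bar> \<le> (2 * h) ^ m * ?J * h"
  proof -
    have "norm (cell_kernel h m c x * (d m x - d m c)) \<le> (2 * h) ^ m * ?J" if "x \<in> {c..c+h}" for x
      unfolding real_norm_def abs_mult
      using abs_cell_kernel_le[OF assms(1) that] oscillation[OF that] assms(1)
      by (intro mult_mono) auto
    from integral_norm_bound_integral[OF int integrable_on_const this]
    show ?thesis using assms(1) by (simp add: mult_ac)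
  qed
  also have "\<dots> \<le> (2 * h) ^ m * ?J * (2 * h)"
  proof -
    have "?J \<ge> 0" using abs_top_integrable by (intro integral_nonneg) auto
    then show ?thesis using assms(1) by (intro mult_left_mono) auto
  qed
  also have "\<dots> = (2 * h) ^ \<alpha> * ?J"
    unfolding assms(2)[symmetric] by (simp add: mult_ac)
  finally show ?thesis .
qed

definition grid_remainder :: "real \<Rightarrow> real \<Rightarrow> nat \<Rightarrow> nat \<Rightarrow> real" where
  "grid_remainder u h n k = (\<Sum>j<n. cell_remainder h k (u + real j * h))"

lemma grid_remainder_0:
  assumes "\<alpha> \<ge> 1" "h > 0"
  shows "grid_remainder u h n 0 = integral {u..u + real n * h} (d 0) - h * (\<Sum>j<n. d 0 (u + real j * h))"
proof -
  have "d 0 integrable_on {u..u + real n * h}"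
    using assms(1) by (intro integrable_continuous_real continuous_on_d) simp
  then show ?thesis
    using sum_integral_uniform_grid[of h "d 0" u n] assms(2)
    by (simp add: grid_remainder_def cell_remainder_def cell_kernel_def sum_subtractf sum_distrib_left)
qed

lemma grid_remainder_Suc:
  assumes "h > 0" "Suc k < \<alpha>"
  shows "grid_remainder u h n k
    = h ^ Suc k * bernoulli_kernel (Suc k) 1 * (d k (u + real n * h) - d k u) - grid_remainder u h n (Suc k)"
proof -
  have "grid_remainder u h n k = (\<Sum>j<n. h ^ Suc k * bernoulli_kernel (Suc k) 1
      * (d k (u + real (Suc j) * h) - d k (u + real j * h)) - cell_remainder h (Suc k) (u + real j * h))"
    unfolding grid_remainder_def cell_remainder_Suc[OF assms]
    by (intro sum.cong) (simp_all add: algebra_simps)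
  also have "\<dots> = h ^ Suc k * bernoulli_kernel (Suc k) 1 * (d k (u + real n * h) - d k u) - grid_remainder u h n (Suc k)"
    using sum_lessThan_telescope[of "\<lambda>j. d k (u + real j * h)" n]
    by (simp add: grid_remainder_def sum_subtractf sum_distrib_left[symmetric])
  finally show ?thesis .
qed

lemma abs_grid_remainder_top:
  assumes "h > 0" "Suc m = \<alpha>"
  shows "\<bar>grid_remainder u h n m\<bar> \<le> (2 * h) ^ \<alpha> * integral {u..u + real n * h} (\<lambda>x. \<bar>d \<alpha> x\<bar>)"
proof -
  have "\<bar>grid_remainder u h n m\<bar>
      \<le> (\<Sum>j<n. (2 * h) ^ \<alpha> * integral {u + real j * h..u + real j * h + h} (\<lambda>x. \<bar>d \<alpha> x\<bar>))"
    unfolding grid_remainder_def by (rule order_trans[OF sum_abs sum_mono]) (rule abs_cell_remainder_top[OF assms])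
  also have "\<dots> = (2 * h) ^ \<alpha> * integral {u..u + real n * h} (\<lambda>x. \<bar>d \<alpha> x\<bar>)"
    using sum_integral_uniform_grid[of h _ u n] abs_top_integrable assms(1)
    by (simp add: sum_distrib_left[symmetric])
  finally show ?thesis .
qed

lemma abs_grid_remainder_le:
  assumes "h > 0" "2 * h \<le> M" "1 \<le> M" "k < \<alpha>"
    and bounded: "\<And>\<tau>. \<tau> < \<alpha> \<Longrightarrow> \<bar>d \<tau> u\<bar> \<le> \<beta> \<and> \<bar>d \<tau> (u + real n * h)\<bar> \<le> \<beta>"
  shows "\<bar>grid_remainder u h n k\<bar> \<le> 2 * real (\<alpha> - 1 - k) * M ^ \<alpha> * \<beta>
    + (2 * h) ^ \<alpha> * integral {u..u + real n * h} (\<lambda>x. \<bar>d \<alpha> x\<bar>)"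
proof -
  have "k \<le> \<alpha> - 1" using assms(4) by simp
  then show ?thesis
  proof (induction k rule: inc_induct)
    case base
    then show ?case using abs_grid_remainder_top[OF assms(1), of "\<alpha> - 1"] assms(4) by simp
  next
    case (step k)
    then have "Suc k < \<alpha>" by simp
    have "\<beta> \<ge> 0" using bounded[of k] step by linarith
    have "\<bar>h ^ Suc k * bernoulli_kernel (Suc k) 1\<bar> \<le> M ^ \<alpha>"
    proof -
      have "\<bar>h ^ Suc k * bernoulli_kernel (Suc k) 1\<bar> \<le> h ^ Suc k * 2 ^ Suc k"
        using abs_bernoulli_kernel_le[of 1 "Suc k"] assms(1) by (simp add: abs_mult)
      also have "\<dots> = (2 * h) ^ Suc k" by (simp add: power_mult_distrib)
      also have "\<dots> \<le> M ^ Suc k" using assms(1,2) by (intro power_mono) auto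
      also have "\<dots> \<le> M ^ \<alpha>" using assms(3) \<open>Suc k < \<alpha>\<close> by (intro power_increasing) auto
      finally show ?thesis .
    qed
    moreover have "\<bar>d k (u + real n * h) - d k u\<bar> \<le> 2 * \<beta>" using bounded[of k] step by linarith
    ultimately have "\<bar>h ^ Suc k * bernoulli_kernel (Suc k) 1 * (d k (u + real n * h) - d k u)\<bar> \<le> M ^ \<alpha> * (2 * \<beta>)"
      unfolding abs_mult[of _ "d k _ - d k _"] by (intro mult_mono) auto
    with step.IH \<open>\<beta> \<ge> 0\<close> show ?case
      unfolding grid_remainder_Suc[OF assms(1) \<open>Suc k < \<alpha>\<close>] using \<open>Suc k < \<alpha>\<close>
      by (simp add: algebra_simps of_nat_diff)
  qed
qed

end

section \<open>Error of the truncated trapezoidal rule\<close>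

lemma step_power_mult_sqrt:
  fixes K L :: real
  assumes "K > 0" "L > 0" "n > 0"
  shows "(4 * sqrt (K * L) / real n) ^ a * sqrt (2 * sqrt (K * L))
    = 4 ^ a * sqrt 2 * K powr (real a / 2 + 1 / 4) * L powr (real a / 2 + 1 / 4) / real n ^ a"
proof -
  have "sqrt (K * L) ^ a * sqrt (sqrt (K * L)) = (K * L) powr (real a / 2 + 1 / 4)"
    using assms(1,2) by (simp add: powr_half_sqrt[symmetric] powr_realpow[symmetric] powr_powr
        powr_add[symmetric] algebra_simps)
  then show ?thesis
    using assms by (simp add: power_divide power_mult_distrib real_sqrt_mult powr_mult)
qed

lemma sqrt_log_step_le:
  fixes K :: real
  assumes "K > 0" "n \<ge> 2"
  shows "4 * sqrt (K * ln (real n)) / real n \<le> max 1 (4 * sqrt K)"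
proof -
  have "real n * 1 \<le> real n * real n" using assms(2) by (intro mult_left_mono) auto
  moreover have "ln (real n) \<le> real n - 1" using ln_le_minus_one[of "real n"] assms(2) by simp
  ultimately have "ln (real n) \<le> real n ^ 2" by (simp add: power2_eq_square)
  then have "sqrt (K * ln (real n)) \<le> sqrt K * real n"
    using assms(1) by (simp add: real_sqrt_mult real_le_lsqrt mult_left_mono)
  then have "4 * sqrt (K * ln (real n)) / real n \<le> 4 * sqrt K" using assms(2) by (simp add: field_simps)
  then show ?thesis by (rule order_trans[OF _ max.cobounded2])
qed

text \<open>The first summand accounts for the boundary terms and the Gaussian tails, the second for
  the Euler--Maclaurin remainder.\<close>

definition trap_error_constant :: "nat \<Rightarrow> real \<Rightarrow> real" where
  "trap_error_constant \<alpha> \<epsilon> =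
     (let K = 2 / (1 - \<epsilon>) * real \<alpha>; p = real \<alpha> / 2 + 1 / 4
      in (2 / ((1 - \<epsilon>) * sqrt (K * ln 2)) + 2 * real (\<alpha> - 1) * (max 1 (4 * sqrt K)) ^ \<alpha>) / ln 2 powr p
         + 4 ^ \<alpha> * sqrt 2 * K powr p)"

context abs_cont_derivatives
begin

lemma trap_rule_error_bound:
  assumes "\<alpha> \<ge> 1" "c > 0" "T > 0" "n > 0" "1 \<le> M" "4 * T / n \<le> M"
    and decay: "\<And>\<tau> x. \<tau> < \<alpha> \<Longrightarrow> \<bar>d \<tau> x\<bar> \<le> D * exp (- (c * x\<^sup>2 / 2))"
    and square: "(\<lambda>x. (d \<alpha> x)\<^sup>2) integrable_on {-T..T}" "sqrt (integral {-T..T} (\<lambda>x. (d \<alpha> x)\<^sup>2)) \<le> S"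
  shows "\<bar>integral\<^sup>L lborel (d 0) - trap_rule n T (d 0)\<bar>
    \<le> (2 / (c * T) + 2 * real (\<alpha> - 1) * M ^ \<alpha>) * D * exp (- (c * T\<^sup>2 / 2))
      + (4 * T / n) ^ \<alpha> * sqrt (2 * T) * S"
proof -
  define h where "h = 2 * T / n"
  define \<beta> where "\<beta> = D * exp (- (c * T\<^sup>2 / 2))"
  have "h > 0" "2 * h \<le> M" "- T + real n * h = T"
    using assms(3,4,6) by (auto simp: h_def)
  have trap: "trap_rule n T (d 0) = h * (\<Sum>j<n. d 0 (- T + real j * h))"
    unfolding trap_rule_def h_def by (simp add: algebra_simps)
  have tails: "\<bar>integral\<^sup>L lborel (d 0) - integral {-T..T} (d 0)\<bar> \<le> 2 * \<beta> / (c * T)"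
    using gaussian_tails_integral_bound(2)[OF continuous_on_d assms(2,3) decay[of 0]] assms(1)
    unfolding \<beta>_def by (simp add: mult.assoc)
  have "\<bar>d \<tau> (- T)\<bar> \<le> \<beta> \<and> \<bar>d \<tau> (- T + real n * h)\<bar> \<le> \<beta>" if "\<tau> < \<alpha>" for \<tau>
    using decay[OF that, of "- T"] decay[OF that, of T] \<open>- T + real n * h = T\<close> by (simp add: \<beta>_def)
  from abs_grid_remainder_le[OF \<open>h > 0\<close> \<open>2 * h \<le> M\<close> assms(5) _ this, of 0] assms(1)
  have riemann: "\<bar>integral {-T..T} (d 0) - h * (\<Sum>j<n. d 0 (- T + real j * h))\<bar>
      \<le> 2 * real (\<alpha> - 1) * M ^ \<alpha> * \<beta> + (2 * h) ^ \<alpha> * integral {-T..T} (\<lambda>x. \<bar>d \<alpha> x\<bar>)"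
    unfolding grid_remainder_0[OF assms(1) \<open>h > 0\<close>] \<open>- T + real n * h = T\<close> by simp
  have "integral {-T..T} (\<lambda>x. \<bar>d \<alpha> x\<bar>) \<le> sqrt (2 * T) * S"
  proof -
    have "integral {-T..T} (\<lambda>x. \<bar>d \<alpha> x\<bar>) \<le> sqrt (2 * T) * sqrt (integral {-T..T} (\<lambda>x. (d \<alpha> x)\<^sup>2))"
      using integral_abs_le_sqrt_length_mult[OF _ abs_top_integrable square(1)] assms(3)
      by (simp add: real_sqrt_mult)
    also have "\<dots> \<le> sqrt (2 * T) * S" using square(2) assms(3) by (intro mult_left_mono) auto
    finally show ?thesis .
  qed
  then have "(2 * h) ^ \<alpha> * integral {-T..T} (\<lambda>x. \<bar>d \<alpha> x\<bar>) \<le> (4 * T / n) ^ \<alpha> * sqrt (2 * T) * S"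
    using \<open>h > 0\<close> by (simp add: h_def mult_left_mono mult.assoc)
  with tails riemann show ?thesis
    unfolding trap \<beta>_def by (simp add: algebra_simps add_divide_distrib)
qed

lemma trap_rule_error_bound_log:
  assumes "\<alpha> \<ge> 1" "c > 0" "K > 0" "c * K = 2 * real \<alpha>" "n \<ge> 2"
    and decay: "\<And>\<tau> x. \<tau> < \<alpha> \<Longrightarrow> \<bar>d \<tau> x\<bar> \<le> D * exp (- (c * x\<^sup>2 / 2))"
    and square: "\<And>a b. a \<le> b \<Longrightarrow>
      (\<lambda>x. (d \<alpha> x)\<^sup>2) integrable_on {a..b} \<and> sqrt (integral {a..b} (\<lambda>x. (d \<alpha> x)\<^sup>2)) \<le> S"
  shows "\<bar>integral\<^sup>L lborel (d 0) - trap_rule n (sqrt (K * ln (real n))) (d 0)\<bar>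
    \<le> (2 / (c * sqrt (K * ln 2)) + 2 * real (\<alpha> - 1) * (max 1 (4 * sqrt K)) ^ \<alpha>) * D / real n ^ \<alpha>
      + 4 ^ \<alpha> * sqrt 2 * K powr (real \<alpha> / 2 + 1 / 4) * S
        * (ln (real n) powr (real \<alpha> / 2 + 1 / 4) / real n ^ \<alpha>)"
proof -
  define L T M where "L = ln (real n)" and "T = sqrt (K * L)" and "M = max 1 (4 * sqrt K)"
  have "L \<ge> ln 2" "L > 0" using assms(5) ln_gt_zero[of "real n"] by (auto simp: L_def)
  then have "T > 0" "sqrt (K * ln 2) \<le> T" using \<open>K > 0\<close> by (auto simp: T_def)
  have "\<bar>d 0 0\<bar> \<le> D" using decay[of 0 0] assms(1) by simp
  then have "D \<ge> 0" using abs_ge_zero[of "d 0 0"] by linarith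
  have gauss: "exp (- (c * T\<^sup>2 / 2)) = 1 / real n ^ \<alpha>"
  proof -
    have "c * T\<^sup>2 / 2 = real \<alpha> * L"
      using \<open>K > 0\<close> \<open>L > 0\<close> assms(4) by (simp add: T_def)
    then show ?thesis
      using assms(5) by (simp add: L_def exp_minus exp_of_nat_mult inverse_eq_divide)
  qed
  have "\<bar>integral\<^sup>L lborel (d 0) - trap_rule n T (d 0)\<bar>
      \<le> (2 / (c * T) + 2 * real (\<alpha> - 1) * M ^ \<alpha>) * D * exp (- (c * T\<^sup>2 / 2))
        + (4 * T / n) ^ \<alpha> * sqrt (2 * T) * S"
    using trap_rule_error_bound[OF assms(1,2) \<open>T > 0\<close> _ _ _ decay] square[of "- T" T]
      sqrt_log_step_le[OF assms(3,5)] \<open>T > 0\<close> assms(5) by (simp add: M_def T_def L_def)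
  also have "\<dots> = (2 / (c * T) + 2 * real (\<alpha> - 1) * M ^ \<alpha>) * D / real n ^ \<alpha>
      + 4 ^ \<alpha> * sqrt 2 * K powr (real \<alpha> / 2 + 1 / 4) * S * (L powr (real \<alpha> / 2 + 1 / 4) / real n ^ \<alpha>)"
    using step_power_mult_sqrt[OF \<open>K > 0\<close> \<open>L > 0\<close>, of n \<alpha>] assms(5)
    unfolding gauss T_def[symmetric] by simp
  also have "\<dots> \<le> (2 / (c * sqrt (K * ln 2)) + 2 * real (\<alpha> - 1) * M ^ \<alpha>) * D / real n ^ \<alpha>
      + 4 ^ \<alpha> * sqrt 2 * K powr (real \<alpha> / 2 + 1 / 4) * S * (L powr (real \<alpha> / 2 + 1 / 4) / real n ^ \<alpha>)"
    using \<open>sqrt (K * ln 2) \<le> T\<close> \<open>T > 0\<close> \<open>D \<ge> 0\<close> assms(2,3)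
    by (intro add_right_mono divide_right_mono mult_right_mono divide_left_mono) auto
  finally show ?thesis unfolding T_def L_def M_def .
qed

lemma trap_rule_error_rate:
  assumes "\<alpha> \<ge> 1" "0 < \<epsilon>" "\<epsilon> < 1" "n \<ge> 2"
    and decay: "\<And>\<tau> x. \<tau> < \<alpha> \<Longrightarrow> \<bar>d \<tau> x\<bar> \<le> D * exp (- ((1 - \<epsilon>) * x\<^sup>2 / 2))"
    and square: "\<And>a b. a \<le> b \<Longrightarrow>
      (\<lambda>x. (d \<alpha> x)\<^sup>2) integrable_on {a..b} \<and> sqrt (integral {a..b} (\<lambda>x. (d \<alpha> x)\<^sup>2)) \<le> S"
  shows "\<bar>integral\<^sup>L lborel (d 0) - trap_rule n (sqrt (2 / (1 - \<epsilon>) * real \<alpha> * ln (real n))) (d 0)\<bar>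
    \<le> trap_error_constant \<alpha> \<epsilon> * (S + D) * ln (real n) powr (real \<alpha> / 2 + 1 / 4) / real n ^ \<alpha>"
proof -
  define K p \<rho> where "K = 2 / (1 - \<epsilon>) * real \<alpha>" and "p = real \<alpha> / 2 + 1 / 4"
    and "\<rho> = ln (real n) powr p / real n ^ \<alpha>"
  define B where "B = 2 / ((1 - \<epsilon>) * sqrt (K * ln 2)) + 2 * real (\<alpha> - 1) * (max 1 (4 * sqrt K)) ^ \<alpha>"
  have "1 - \<epsilon> > 0" "K > 0" "(1 - \<epsilon>) * K = 2 * real \<alpha>" using assms(1-3) by (auto simp: K_def)
  have "B \<ge> 0" "\<rho> \<ge> 0" using assms(3) \<open>K > 0\<close> by (auto simp: B_def \<rho>_def)
  have "\<bar>d 0 0\<bar> \<le> D" using decay[of 0 0] assms(1) by simp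
  then have "D \<ge> 0" using abs_ge_zero[of "d 0 0"] by linarith
  have "S \<ge> 0" using square[of 0 0] by simp
  from trap_rule_error_bound_log[OF assms(1) \<open>1 - \<epsilon> > 0\<close> \<open>K > 0\<close> \<open>(1 - \<epsilon>) * K = 2 * real \<alpha>\<close> assms(4)
      decay square]
  have error: "\<bar>integral\<^sup>L lborel (d 0) - trap_rule n (sqrt (K * ln (real n))) (d 0)\<bar>
      \<le> B * D / real n ^ \<alpha> + 4 ^ \<alpha> * sqrt 2 * K powr p * S * \<rho>"
    unfolding B_def p_def \<rho>_def .
  have boundary: "B * D / real n ^ \<alpha> \<le> B / ln 2 powr p * D * \<rho>"
  proof -
    have "1 \<le> ln (real n) powr p / ln 2 powr p"
      using assms(4) by (simp add: p_def powr_mono2)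
    then have "B * D * 1 \<le> B * D * (ln (real n) powr p / ln 2 powr p)"
      by (rule mult_left_mono) (use \<open>B \<ge> 0\<close> \<open>D \<ge> 0\<close> in simp)
    then have "B * D / real n ^ \<alpha> \<le> B * D * (ln (real n) powr p / ln 2 powr p) / real n ^ \<alpha>"
      by (intro divide_right_mono) auto
    then show ?thesis by (simp add: \<rho>_def)
  qed
  have combine: "b\<^sub>1 * D * \<rho> + b\<^sub>2 * S * \<rho> \<le> (b\<^sub>1 + b\<^sub>2) * (S + D) * \<rho>"
    if "b\<^sub>1 \<ge> 0" "b\<^sub>2 \<ge> 0" for b\<^sub>1 b\<^sub>2 :: real
  proof -
    have "(b\<^sub>1 + b\<^sub>2) * (S + D) * \<rho> = b\<^sub>1 * D * \<rho> + b\<^sub>2 * S * \<rho> + (b\<^sub>1 * S * \<rho> + b\<^sub>2 * D * \<rho>)"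
      by (simp add: algebra_simps)
    moreover have "0 \<le> b\<^sub>1 * S * \<rho> + b\<^sub>2 * D * \<rho>"
      using that \<open>\<rho> \<ge> 0\<close> \<open>S \<ge> 0\<close> \<open>D \<ge> 0\<close> by simp
    ultimately show ?thesis by linarith
  qed
  have "trap_error_constant \<alpha> \<epsilon> = B / ln 2 powr p + 4 ^ \<alpha> * sqrt 2 * K powr p"
    by (simp add: trap_error_constant_def Let_def B_def K_def p_def)
  then have "B / ln 2 powr p * D * \<rho> + 4 ^ \<alpha> * sqrt 2 * K powr p * S * \<rho> \<le> trap_error_constant \<alpha> \<epsilon> * (S + D) * \<rho>"
    using \<open>B \<ge> 0\<close> by (simp only:) (intro combine; simp)
  with error boundary show ?thesis
    unfolding K_def \<rho>_def p_def by simp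
qed

end

theorem proposition4p2:
  fixes \<alpha> :: nat and \<epsilon> :: real
  assumes "\<alpha> \<ge> 1" and "0 < \<epsilon>" and "\<epsilon> < 1"
  shows "\<exists>C::real. \<forall>(g::real \<Rightarrow> real) (d::nat \<Rightarrow> real \<Rightarrow> real) (n::nat).
     d 0 = g \<longrightarrow>
     (\<forall>\<tau><\<alpha>. \<forall>a b. abs_cont_on {a..b} (d \<tau>)) \<longrightarrow>
     (\<forall>\<tau><\<alpha>. AE x in lborel. (d \<tau> has_real_derivative d (Suc \<tau>) x) (at x)) \<longrightarrow>
     d \<alpha> \<in> borel_measurable lborel \<longrightarrow>
     integrable lborel (\<lambda>x. (d \<alpha> x)\<^sup>2) \<longrightarrow>
     bdd_above (star_set \<alpha> d) \<longrightarrow>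
     bdd_above (decay_set \<alpha> \<epsilon> d) \<longrightarrow>
     n \<ge> 2 \<longrightarrow>
     \<bar>integral\<^sup>L lborel g - trap_rule n (sqrt (2 / (1 - \<epsilon>) * real \<alpha> * ln (real n))) g\<bar>
       \<le> C * (star_norm \<alpha> d + decay_norm \<alpha> \<epsilon> d)
           * ln (real n) powr (real \<alpha> / 2 + 1 / 4) / real n ^ \<alpha>"
proof (intro exI[of _ "trap_error_constant \<alpha> \<epsilon>"] allI impI)
  fix g :: "real \<Rightarrow> real" and d :: "nat \<Rightarrow> real \<Rightarrow> real" and n :: nat
  assume "d 0 = g"
    and "\<forall>\<tau><\<alpha>. \<forall>a b. abs_cont_on {a..b} (d \<tau>)"
    and "\<forall>\<tau><\<alpha>. AE x in lborel. (d \<tau> has_real_derivative d (Suc \<tau>) x) (at x)"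
    and measurable: "d \<alpha> \<in> borel_measurable lborel"
    and square: "integrable lborel (\<lambda>x. (d \<alpha> x)\<^sup>2)"
    and star: "bdd_above (star_set \<alpha> d)"
    and decay: "bdd_above (decay_set \<alpha> \<epsilon> d)"
    and "n \<ge> 2"
  then interpret abs_cont_derivatives \<alpha> d
    using square_integrable_imp_integrable_on(2)[OF measurable square] by unfold_locales auto
  show "\<bar>integral\<^sup>L lborel g - trap_rule n (sqrt (2 / (1 - \<epsilon>) * real \<alpha> * ln (real n))) g\<bar>
      \<le> trap_error_constant \<alpha> \<epsilon> * (star_norm \<alpha> d + decay_norm \<alpha> \<epsilon> d)
        * ln (real n) powr (real \<alpha> / 2 + 1 / 4) / real n ^ \<alpha>"
    using trap_rule_error_rate[OF assms \<open>n \<ge> 2\<close> abs_le_decay_norm[OF decay]]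
      square_integrable_imp_integrable_on(1)[OF measurable square]
      sqrt_integral_square_le_star_norm[OF star square] \<open>d 0 = g\<close>
    by auto
qed

end
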